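(* Let $K$ be an abelian topological group which is compact or torsion, and $X$ a topological vector space over $\mathbf{C}$. Then $P(K,X)=P^0(K,X)$, i.e. every polynomial $p:K\to X$ is constant.
   Context: $\mathbf{Z}_+=\{0,1,2,\dots\}$. A group is torsion if every element has finite order. A continuous $p:K\to X$ is a polynomial of degree at most $n$ if for all $s,t\in K$ the map $m\mapsto p(s+mt)$, $m\in\mathbf{Z}_+$, is a polynomial in $m$ of degree at most $n$ with coefficients in $X$; $P^n(K,X)$ is the space of these and $P(K,X)=\bigcup_{n}P^n(K,X)$. *)

theory Defs
  imports "HOL-Analysis.Analysis"
begin

primrec nmul :: "nat \<Rightarrow> 'a::monoid_add \<Rightarrow> 'a" where
  "nmul 0 t = 0"
| "nmul (Suc m) t = t + nmul m t"

definition complex_tvs :: "(complex \<Rightarrow> 'x::{topological_ab_group_add,t2_space} \<Rightarrow> 'x) \<Rightarrow> bool" where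
  "complex_tvs smul \<longleftrightarrow> vector_space smul \<and>
     continuous_on UNIV (\<lambda>z::complex \<times> 'x. smul (fst z) (snd z))"

definition polys_deg :: "(complex \<Rightarrow> 'x::{topological_ab_group_add,t2_space} \<Rightarrow> 'x) \<Rightarrow> nat
    \<Rightarrow> ('k::topological_ab_group_add \<Rightarrow> 'x) set" where
  "polys_deg smul n = {p. continuous_on UNIV p \<and>
     (\<forall>s t. \<exists>a::nat \<Rightarrow> 'x. \<forall>m::nat.
        p (s + nmul m t) = (\<Sum>k\<le>n. smul (of_nat m ^ k) (a k)))}"

definition polys :: "(complex \<Rightarrow> 'x::{topological_ab_group_add,t2_space} \<Rightarrow> 'x)
    \<Rightarrow> ('k::topological_ab_group_add \<Rightarrow> 'x) set" where
  "polys smul = (\<Union>n. polys_deg smul n)"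

definition torsion_group :: "'k::monoid_add itself \<Rightarrow> bool" where
  "torsion_group _ \<longleftrightarrow> (\<forall>x::'k. \<exists>m>0. nmul m x = 0)"

end

theory Submission
  imports Defs
begin

text \<open>Along any arithmetic progression s + m t a polynomial takes its values in a compact set:
  the image of K when K is compact, finitely many values when t has finite order. A polynomial
  sequence \<open>\<Sum>k\<le>N. m^k a\<^sub>k\<close> with values in a compact set has vanishing leading coefficient
  for N > 0, since dividing by \<open>m^N\<close> gives a sequence tending to \<open>a\<^sub>N\<close>, while scalars tending
  to 0 times a compact set tend to 0. Hence all coefficients of positive degree vanish.\<close>

lemma complex_tvs_vector_space: "complex_tvs smul \<Longrightarrow> vector_space smul"
  unfolding complex_tvs_def by blast

lemma tendsto_complex_tvs_smul:
  assumes "complex_tvs smul" and "(g \<longlongrightarrow> c) F" and "(h \<longlongrightarrow> x) F"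
  shows "((\<lambda>y. smul (g y) (h y)) \<longlongrightarrow> smul c x) F"
proof -
  have "isCont (\<lambda>z::complex \<times> _. smul (fst z) (snd z)) (c, x)"
    using assms(1) unfolding complex_tvs_def by (simp add: continuous_on_eq_continuous_at)
  from isCont_tendsto_compose[OF this tendsto_Pair[OF assms(2,3)]] show ?thesis by simp
qed

lemma tendsto_complex_tvs_smul_zero_compact:
  fixes smul :: "complex \<Rightarrow> 'x::{topological_ab_group_add,t2_space} \<Rightarrow> 'x"
  assumes tvs: "complex_tvs smul" and "compact C" and "\<And>y. v y \<in> C" and "(g \<longlongrightarrow> 0) F"
  shows "((\<lambda>y. smul (g y) (v y)) \<longlongrightarrow> 0) F"
proof (rule topological_tendstoI)
  fix W :: "'x set" assume W: "open W" "0 \<in> W"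
  interpret vector_space smul using tvs by (rule complex_tvs_vector_space)
  let ?U = "(\<lambda>z::complex \<times> 'x. smul (fst z) (snd z)) -` W"
  have "open ?U"
    using tvs W(1) unfolding complex_tvs_def by (blast intro: open_vimage)
  moreover have "{0} \<times> C \<subseteq> ?U" using W(2) by auto
  ultimately obtain A where A: "open A" "0 \<in> A" "A \<times> C \<subseteq> ?U"
    using Elementary_Topology.tube_lemma[OF \<open>compact C\<close>] by blast
  have "eventually (\<lambda>y. g y \<in> A) F" using topological_tendstoD[OF assms(4) A(1,2)] .
  then show "eventually (\<lambda>y. smul (g y) (v y) \<in> W) F"
  proof eventually_elim
    case (elim y)
    then have "(g y, v y) \<in> ?U" using A(3) assms(3) by blast
    then show ?case by simp
  qed
qed

lemma tendsto_of_nat_power_divide_power: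
  fixes k N :: nat assumes "k \<le> N"
  shows "((\<lambda>m. of_nat m ^ k / of_nat m ^ N :: complex) \<longlongrightarrow> (if k = N then 1 else 0)) sequentially"
proof (cases "k = N")
  case True
  have "eventually (\<lambda>m. (of_nat m ^ k / of_nat m ^ N :: complex) = 1) sequentially"
    using eventually_gt_at_top[of 0] by eventually_elim (simp add: True)
  with True show ?thesis by (simp add: tendsto_eventually)
next
  case False
  have "((\<lambda>m. inverse (of_nat m :: complex) ^ (N - k)) \<longlongrightarrow> 0) sequentially"
    using tendsto_power[OF lim_inverse_n, of "N - k"] False assms by (simp add: power_0_left)
  moreover have "eventually (\<lambda>m. inverse (of_nat m :: complex) ^ (N - k)
      = of_nat m ^ k / of_nat m ^ N) sequentially"
    using eventually_gt_at_top[of 0]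
  proof eventually_elim
    case (elim m)
    have "(of_nat m ^ N :: complex) = of_nat m ^ k * of_nat m ^ (N - k)"
      using assms by (simp flip: power_add)
    with elim show ?case by (simp add: power_inverse divide_inverse)
  qed
  ultimately show ?thesis
    using False by (simp add: tendsto_cong)
qed

lemma leading_coeff_zero_if_compact_values:
  fixes smul :: "complex \<Rightarrow> 'x::{topological_ab_group_add,t2_space} \<Rightarrow> 'x"
  assumes tvs: "complex_tvs smul" and "compact C" and "N > 0"
    and in_C: "\<And>m::nat. (\<Sum>k\<le>N. smul (of_nat m ^ k) (a k)) \<in> C"
  shows "a N = 0"
proof -
  interpret vector_space smul using tvs by (rule complex_tvs_vector_space)
  define q where "q m = (\<Sum>k\<le>N. smul (of_nat m ^ k) (a k))" for m :: nat
  have "((\<lambda>m. \<Sum>k\<le>N. smul (of_nat m ^ k / of_nat m ^ N) (a k))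
      \<longlongrightarrow> (\<Sum>k\<le>N. smul (if k = N then 1 else 0) (a k))) sequentially"
    by (intro tendsto_sum tendsto_complex_tvs_smul[OF tvs]
        tendsto_of_nat_power_divide_power tendsto_const) auto
  moreover have "(\<Sum>k\<le>N. smul (if k = N then 1 else 0) (a k)) = a N"
  proof -
    have "(\<Sum>k\<le>N. smul (if k = N then 1 else 0) (a k)) = (\<Sum>k\<le>N. if k = N then a k else 0)"
      by (intro sum.cong) auto
    then show ?thesis by simp
  qed
  moreover have "smul (1 / of_nat m ^ N) (q m)
      = (\<Sum>k\<le>N. smul (of_nat m ^ k / of_nat m ^ N) (a k))" for m
    by (simp add: q_def scale_sum_right)
  ultimately have "((\<lambda>m. smul (1 / of_nat m ^ N) (q m)) \<longlongrightarrow> a N) sequentially"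
    by simp
  moreover have "((\<lambda>m. smul (1 / of_nat m ^ N) (q m)) \<longlongrightarrow> 0) sequentially"
  proof (rule tendsto_complex_tvs_smul_zero_compact[OF tvs \<open>compact C\<close>])
    show "q m \<in> C" for m unfolding q_def by (rule in_C)
    show "((\<lambda>m. 1 / of_nat m ^ N :: complex) \<longlongrightarrow> 0) sequentially"
      using tendsto_of_nat_power_divide_power[of 0 N] \<open>N > 0\<close> by simp
  qed
  ultimately show ?thesis by (rule LIMSEQ_unique)
qed

lemma polynomial_sequence_const_if_compact_values:
  fixes smul :: "complex \<Rightarrow> 'x::{topological_ab_group_add,t2_space} \<Rightarrow> 'x"
  assumes tvs: "complex_tvs smul" and "compact C"
    and "\<And>m::nat. (\<Sum>k\<le>n. smul (of_nat m ^ k) (a k)) \<in> C"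
  shows "(\<Sum>k\<le>n. smul (of_nat m ^ k) (a k)) = a 0"
  using assms(3)
proof (induction n)
  case 0
  interpret vector_space smul using tvs by (rule complex_tvs_vector_space)
  show ?case by simp
next
  case (Suc n)
  interpret vector_space smul using tvs by (rule complex_tvs_vector_space)
  have "a (Suc n) = 0"
    using leading_coeff_zero_if_compact_values[OF tvs \<open>compact C\<close>] Suc.prems by blast
  with Suc show ?case by simp
qed

lemma nmul_add: "nmul (i + j) (t::'a::comm_monoid_add) = nmul i t + nmul j t"
  by (induction i) (simp_all add: add.assoc)

lemma nmul_mod:
  assumes "nmul N (t::'a::comm_monoid_add) = 0"
  shows "nmul (m mod N) t = nmul m t"
proof -
  have "nmul (q * N) t = 0" for q
    by (induction q) (simp_all add: nmul_add assms)
  then show ?thesis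
    by (metis add_0 div_mult_mod_eq nmul_add)
qed

lemma progression_values_in_compact:
  fixes p :: "'k::topological_ab_group_add \<Rightarrow> 'x::topological_space"
  assumes "compact (UNIV :: 'k set) \<or> torsion_group TYPE('k)" and "continuous_on UNIV p"
  obtains C where "compact C" and "\<And>m. p (s + nmul m t) \<in> C"
proof (cases "compact (UNIV :: 'k set)")
  case True
  show ?thesis
    by (rule that[of "range p"]) (auto intro: compact_continuous_image assms(2) True)
next
  case False
  then obtain N where "N > 0" "nmul N t = 0"
    using assms(1) unfolding torsion_group_def by blast
  then have "p (s + nmul m t) \<in> (\<lambda>j. p (s + nmul j t)) ` {..<N}" for m
    using nmul_mod[of N t m] by (intro image_eqI[of _ _ "m mod N"]) auto
  then show ?thesis
    by (rule that[OF finite_imp_compact, rotated]) simp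
qed

theorem lemma2p4:
  fixes smul :: "complex \<Rightarrow> 'x::{topological_ab_group_add,t2_space} \<Rightarrow> 'x"
  assumes "compact (UNIV :: 'k::topological_ab_group_add set) \<or> torsion_group TYPE('k)"
    and "complex_tvs smul"
  shows "(polys smul :: ('k \<Rightarrow> 'x) set) = polys_deg smul 0"
proof
  show "polys_deg smul 0 \<subseteq> polys smul" unfolding polys_def by blast
  interpret vector_space smul using assms(2) by (rule complex_tvs_vector_space)
  show "polys smul \<subseteq> (polys_deg smul 0 :: ('k \<Rightarrow> 'x) set)"
  proof
    fix p :: "'k \<Rightarrow> 'x" assume "p \<in> polys smul"
    then obtain n where p: "p \<in> polys_deg smul n" unfolding polys_def by blast
    then have cont: "continuous_on UNIV p" unfolding polys_deg_def by blast
    have "\<forall>m::nat. p (s + nmul m t) = p s" for s t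
    proof -
      obtain a where a: "\<And>m::nat. p (s + nmul m t) = (\<Sum>k\<le>n. smul (of_nat m ^ k) (a k))"
        using p unfolding polys_deg_def by blast
      obtain C where "compact C" "\<And>m. p (s + nmul m t) \<in> C"
        using progression_values_in_compact[OF assms(1) cont] by blast
      then have "p (s + nmul m t) = a 0" for m
        using polynomial_sequence_const_if_compact_values[OF assms(2)] a by metis
      from this this[of 0] show ?thesis by simp
    qed
    with cont show "p \<in> polys_deg smul 0" unfolding polys_deg_def by (simp add: exI[of _ "\<lambda>_. _"])
  qed
qed

end
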